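(* Let $f:\mathcal E\to\mathbb R$ be smooth, $\mathcal M\subset\mathcal E$ a submanifold, and $\mathrm{Retr}$ a smooth retraction extended to $\mathcal E$ as in the context. Then for every $x\in\mathcal M$ there exists $\delta>0$ with the following property. For every $\xi\in\mathcal T_x\mathcal M$ with $\|\xi\|<\delta$, setting $y=\mathrm{Retr}(x,\xi)$, one has $\|P_{\mathcal T_y\mathcal M}-\mathrm{J}_\xi\mathrm{Retr}(x,\xi)\|_2<1$ and $$\|\mathrm{grad}\, f(y)\|\le\frac{1}{1-\|P_{\mathcal T_y\mathcal M}-\mathrm{J}_\xi\mathrm{Retr}(x,\xi)\|_2}\,\|\nabla_\xi\hat f_x(\xi)\|,$$ where $\|\cdot\|_2$ is the spectral norm.
   Context: $\mathcal E=\mathbb R^n$ carries the standard inner product and norm. $\mathcal M\subset\mathcal E$ is a smooth embedded submanifold with tangent spaces $\mathcal T_x\mathcal M$, and $P_{\mathcal T_x\mathcal M}$ is the orthogonal projection onto $\mathcal T_x\mathcal M$. The Riemannian gradient is $\mathrm{grad}\, f(x)=P_{\mathcal T_x\mathcal M}\nabla f(x)$. A retraction is a smooth map $\mathrm{Retr}(x,\xi)\in\mathcal M$, for $x\in\mathcal M$ and $\xi\in\mathcal T_x\mathcal M$, with $\mathrm{Retr}(x,0)=x$ and $\frac d{dt}\mathrm{Retr}(x,t\xi)|_{t=0}=\xi$. It is extended to $\mathcal E$ by $\mathrm{Retr}(x,z):=\mathrm{Retr}(x,P_{\mathcal T_x\mathcal M}z)$. The pullback is $\hat f_x(\xi)=f(\mathrm{Retr}(x,\xi))$.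 $\mathrm J_\xi$ and $\nabla_\xi$ denote the Euclidean Jacobian and gradient with respect to $\xi\in\mathcal E$. *)

theory Defs
  imports "HOL-Analysis.Analysis"
begin

text \<open>C-infinity real-valued functions on an (open) set U: g lies in a family S of
  functions that are differentiable on U and that is closed under taking
  directional derivatives x \<mapsto> Dh(x) v, for every direction v.\<close>
definition smooth_real_on :: "'a::euclidean_space set \<Rightarrow> ('a \<Rightarrow> real) \<Rightarrow> bool" where
  "smooth_real_on U g \<longleftrightarrow>
     (\<exists>S. g \<in> S \<and> (\<forall>h\<in>S. h differentiable_on U \<and>
                         (\<forall>v. (\<lambda>x. frechet_derivative h (at x) v) \<in> S)))"

definition smooth_on :: "'a::euclidean_space set \<Rightarrow> ('a \<Rightarrow> 'b::euclidean_space) \<Rightarrow> bool" where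
  "smooth_on U F \<longleftrightarrow> open U \<and> (\<forall>b\<in>Basis. smooth_real_on U (\<lambda>x. F x \<bullet> b))"

definition smooth_map_on :: "'a::euclidean_space set \<Rightarrow> ('a \<Rightarrow> 'b::euclidean_space) \<Rightarrow> bool" where
  "smooth_map_on S F \<longleftrightarrow>
     (\<forall>p\<in>S. \<exists>U G. open U \<and> p \<in> U \<and> smooth_on U G \<and> (\<forall>q\<in>U \<inter> S. G q = F q))"

definition submanifold :: "'a::euclidean_space set \<Rightarrow> bool" where
  "submanifold M \<longleftrightarrow>
     (\<forall>p\<in>M. \<exists>U V (\<phi>::'a \<Rightarrow> 'a) \<psi> L.
        open U \<and> open V \<and> p \<in> U \<and> smooth_on U \<phi> \<and> smooth_on V \<psi> \<and>
        \<phi> ` U = V \<and> (\<forall>x\<in>U. \<psi> (\<phi> x) = x) \<and> (\<forall>y\<in>V. \<phi> (\<psi> y) = y) \<and>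
        subspace L \<and> \<phi> ` (M \<inter> U) = V \<inter> L)"

definition tangent_space :: "'a::euclidean_space set \<Rightarrow> 'a \<Rightarrow> 'a set" where
  "tangent_space M x =
     {v. \<exists>(c::real \<Rightarrow> 'a) e. e > 0 \<and> smooth_on {-e<..<e} c \<and> c 0 = x \<and>
          (\<forall>t\<in>{-e<..<e}. c t \<in> M) \<and> (c has_vector_derivative v) (at 0)}"

definition tproj :: "'a::euclidean_space set \<Rightarrow> 'a \<Rightarrow> 'a \<Rightarrow> 'a" where
  "tproj M x z = closest_point (tangent_space M x) z"

definition tangent_bundle :: "'a::euclidean_space set \<Rightarrow> ('a \<times> 'a) set" where
  "tangent_bundle M = {(x, v). x \<in> M \<and> v \<in> tangent_space M x}"

definition egrad :: "('a::euclidean_space \<Rightarrow> real) \<Rightarrow> 'a \<Rightarrow> 'a" where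
  "egrad g z = (SOME w. GDERIV g z :> w)"

definition rgrad :: "'a::euclidean_space set \<Rightarrow> ('a \<Rightarrow> real) \<Rightarrow> 'a \<Rightarrow> 'a" where
  "rgrad M f x = tproj M x (egrad f x)"

definition retraction :: "'a::euclidean_space set \<Rightarrow> ('a \<Rightarrow> 'a \<Rightarrow> 'a) \<Rightarrow> bool" where
  "retraction M R \<longleftrightarrow>
     smooth_map_on (tangent_bundle M) (\<lambda>(x, v). R x v) \<and>
     (\<forall>x\<in>M. \<forall>v\<in>tangent_space M x. R x v \<in> M) \<and>
     (\<forall>x\<in>M. R x 0 = x) \<and>
     (\<forall>x\<in>M. \<forall>v\<in>tangent_space M x. ((\<lambda>t. R x (t *\<^sub>R v)) has_vector_derivative v) (at 0))"

definition retr_ext :: "'a::euclidean_space set \<Rightarrow> ('a \<Rightarrow> 'a \<Rightarrow> 'a) \<Rightarrow> 'a \<Rightarrow> 'a \<Rightarrow> 'a" where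
  "retr_ext M R x z = R x (tproj M x z)"

end

theory Submission
  imports Defs
begin

text \<open>Fix \<open>x \<in> M\<close>. Near \<open>(x, 0)\<close> the retraction agrees on the tangent bundle with a smooth map
  \<open>G\<close>, so the extended retraction \<open>\<xi> \<mapsto> G (x, P\<^sub>x \<xi>)\<close> has Jacobian
  \<open>J\<^sub>\<xi> = DG (x, P\<^sub>x \<xi>) (0, P\<^sub>x -)\<close>. It depends continuously on \<open>\<xi>\<close>, equals \<open>P\<^sub>x\<close> at
  \<open>\<xi> = 0\<close> (the retraction has velocity \<open>v\<close> along \<open>t \<mapsto> Retr x (t v)\<close>), and maps into
  \<open>T\<^sub>y M\<close> for \<open>y = Retr x \<xi>\<close>, since its values are velocities of curves in \<open>M\<close>.
  In a slice chart \<open>T\<^sub>z M = D\<psi> (\<phi> z) L\<close>; the orthogonal projection onto the image of a fixed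
  subspace under continuously varying linear maps with continuous left inverses is continuous,
  so \<open>P\<^sub>y \<rightarrow> P\<^sub>x\<close> as \<open>\<xi> \<rightarrow> 0\<close>. Hence \<open>c = \<parallel>P\<^sub>y - J\<^sub>\<xi>\<parallel> \<rightarrow> 0\<close>, and \<open>c < 1\<close> for small \<open>\<xi>\<close>.
  Finally, with \<open>p = P\<^sub>y \<nabla>f(y)\<close> and \<open>\<nabla>f\<^sub>x(\<xi>) = J\<^sub>\<xi>\<^sup>T \<nabla>f(y)\<close>,
  \<open>\<parallel>p\<parallel>\<^sup>2 = \<langle>(P\<^sub>y - J\<^sub>\<xi>) p, p\<rangle> + \<langle>\<nabla>f\<^sub>x(\<xi>), p\<rangle> \<le> c \<parallel>p\<parallel>\<^sup>2 + \<parallel>\<nabla>f\<^sub>x(\<xi>)\<parallel> \<parallel>p\<parallel>\<close>.\<close>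

section \<open>Orthogonal projection onto a subspace\<close>

context
  fixes S :: "'a::euclidean_space set"
  assumes S: "subspace S"
begin

lemma closest_point_in_subspace: "closest_point S a \<in> S"
  using S by (metis closed_subspace closest_point_in_set empty_iff subspace_0)

lemma closest_point_subspace_orthogonal:
  assumes y: "y \<in> S"
  shows "(a - closest_point S a) \<bullet> y = 0"
proof -
  let ?p = "closest_point S a"
  have cvx: "convex S" "closed S" using S by (auto simp: subspace_imp_convex closed_subspace)
  have "?p + y \<in> S" "?p - y \<in> S"
    using closest_point_in_subspace y S by (auto simp: subspace_add subspace_diff)
  from closest_point_dot[OF cvx this(1), of a] closest_point_dot[OF cvx this(2), of a]
  show ?thesis by (simp add: inner_diff_right)
qed

lemma closest_point_subspace_unique:
  assumes p: "p \<in> S" and orth: "\<And>y. y \<in> S \<Longrightarrow> (a - p) \<bullet> y = 0"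
  shows "closest_point S a = p"
proof -
  have cvx: "convex S" "closed S" using S by (auto simp: subspace_imp_convex closed_subspace)
  have "\<forall>z\<in>S. dist a p \<le> dist a z"
  proof
    fix z assume z: "z \<in> S"
    have "(a - p) \<bullet> (p - z) = 0" using orth S p z by (simp add: subspace_diff)
    then have "(norm (a - z))\<^sup>2 = (norm (a - p))\<^sup>2 + (norm (p - z))\<^sup>2"
      using norm_add_Pythagorean[of "a - p" "p - z"] by (simp add: orthogonal_def)
    then have "(norm (a - p))\<^sup>2 \<le> (norm (a - z))\<^sup>2" by simp
    then show "dist a p \<le> dist a z" by (simp add: dist_norm power2_le_iff_abs_le)
  qed
  from closest_point_unique[OF cvx p this] show ?thesis by simp
qed

lemma linear_closest_point_subspace: "linear (closest_point S)"
proof (rule linearI)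
  show "closest_point S (a + b) = closest_point S a + closest_point S b" for a b
  proof (rule closest_point_subspace_unique)
    fix y assume "y \<in> S"
    then have "(a - closest_point S a) \<bullet> y + (b - closest_point S b) \<bullet> y = 0"
      by (simp add: closest_point_subspace_orthogonal)
    then show "(a + b - (closest_point S a + closest_point S b)) \<bullet> y = 0"
      by (simp add: algebra_simps inner_diff_left inner_add_left)
  qed (simp add: closest_point_in_subspace subspace_add[OF S])
  show "closest_point S (c *\<^sub>R a) = c *\<^sub>R closest_point S a" for c a
    by (rule closest_point_subspace_unique)
       (auto simp: closest_point_in_subspace subspace_scale[OF S] closest_point_subspace_orthogonal
          simp flip: scaleR_right_diff_distrib)
qed

lemma bounded_linear_closest_point_subspace: "bounded_linear (closest_point S)"
  using linear_closest_point_subspace linear_conv_bounded_linear by blast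

lemma norm_closest_point_subspace_le: "norm (closest_point S a) \<le> norm a"
proof -
  let ?p = "closest_point S a"
  have "(a - ?p) \<bullet> ?p = 0" by (rule closest_point_subspace_orthogonal[OF closest_point_in_subspace])
  then have "(norm a)\<^sup>2 = (norm ?p)\<^sup>2 + (norm (a - ?p))\<^sup>2"
    by (simp add: power2_norm_eq_inner inner_diff_left inner_diff_right inner_commute)
  then have "(norm ?p)\<^sup>2 \<le> (norm a)\<^sup>2" by simp
  then show ?thesis by (simp add: power2_le_iff_abs_le)
qed

end

lemma norm_linear_le_sum_Basis:
  fixes T :: "'a::euclidean_space \<Rightarrow> 'b::euclidean_space"
  assumes "linear T"
  shows "norm (T u) \<le> (\<Sum>i\<in>Basis. norm (T i)) * norm u"
proof -
  have bl: "bounded_linear T" using assms linear_conv_bounded_linear by blast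
  have "norm (T u) \<le> onorm T * norm u" by (rule onorm[OF bl])
  also have "\<dots> \<le> (\<Sum>i\<in>Basis. norm (T i)) * norm u"
    by (rule mult_right_mono[OF onorm_componentwise[OF bl] norm_ge_zero])
  finally show ?thesis .
qed

lemma closest_point_image_estimate:
  fixes A B :: "'a::euclidean_space \<Rightarrow> 'b::euclidean_space" and D :: "'b \<Rightarrow> 'a"
  assumes L: "subspace L" and A: "linear A" and B: "linear B"
    and D: "\<And>w. w \<in> L \<Longrightarrow> D (B w) = w"
    and \<epsilon>: "\<And>u. norm (B u - A u) \<le> \<epsilon> * norm u" "\<epsilon> \<ge> 0"
    and \<kappa>: "\<And>v. norm (D v) \<le> \<kappa> * norm v" "\<kappa> \<ge> 0"
    and w: "w \<in> L" "closest_point (A ` L) b = A w"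
  shows "norm (closest_point (B ` L) b - closest_point (A ` L) b)
           \<le> sqrt ((norm (b - B w) + \<epsilon> * (\<kappa> * norm b))\<^sup>2 - (norm (b - A w))\<^sup>2) + \<epsilon> * (\<kappa> * norm b)"
proof -
  define e where "e = \<epsilon> * (\<kappa> * norm b)"
  have AL: "subspace (A ` L)" and BL: "subspace (B ` L)"
    using L A B by (auto intro: linear_subspace_image)
  define p where "p = closest_point (B ` L) b"
  obtain w' where w': "w' \<in> L" and p: "p = B w'"
    using closest_point_in_subspace[OF BL] unfolding p_def by blast
  \<comment> \<open>\<open>t\<close> lies in \<open>A ` L\<close> and is \<open>e\<close>-close to \<open>p\<close>; Pythagoras in \<open>A ` L\<close> bounds its distance to \<open>A w\<close>\<close>
  define t where "t = A w'"
  have "norm w' \<le> \<kappa> * norm b"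
  proof -
    have "norm w' \<le> \<kappa> * norm p" using \<kappa>(1)[of p] by (simp add: p D[OF w'])
    also have "\<dots> \<le> \<kappa> * norm b"
      unfolding p_def by (rule mult_left_mono[OF norm_closest_point_subspace_le[OF BL] \<kappa>(2)])
    finally show ?thesis .
  qed
  then have pt: "norm (p - t) \<le> e"
    unfolding e_def t_def p using \<epsilon> by (meson mult_left_mono order_trans)
  have "norm (b - p) \<le> norm (b - B w)"
    using closest_point_le[OF closed_subspace[OF BL], of "B w" b] w(1) unfolding p_def
    by (simp add: dist_norm)
  then have bt: "norm (b - t) \<le> norm (b - B w) + e"
    using norm_triangle_ineq[of "b - p" "p - t"] pt by simp
  have "A w - t \<in> A ` L" unfolding t_def using w'
    by (metis AL w(1) imageI subspace_diff linear_diff[OF A])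
  then have "(b - A w) \<bullet> (A w - t) = 0"
    using closest_point_subspace_orthogonal[OF AL] w(2) by metis
  then have "(norm (b - t))\<^sup>2 = (norm (b - A w))\<^sup>2 + (norm (A w - t))\<^sup>2"
    using norm_add_Pythagorean[of "b - A w" "A w - t"] by (simp add: orthogonal_def)
  moreover have "(norm (b - t))\<^sup>2 \<le> (norm (b - B w) + e)\<^sup>2"
    using bt by (simp add: power_mono)
  ultimately have "norm (A w - t) \<le> sqrt ((norm (b - B w) + e)\<^sup>2 - (norm (b - A w))\<^sup>2)"
    by (intro real_le_rsqrt) simp
  moreover have "norm (p - A w) \<le> norm (p - t) + norm (A w - t)"
    using norm_triangle_ineq4[of "p - t" "A w - t"] by simp
  ultimately show ?thesis using pt unfolding p_def e_def w(2) by linarith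
qed

lemma tendsto_closest_point_image:
  fixes A :: "'i \<Rightarrow> 'a::euclidean_space \<Rightarrow> 'b::euclidean_space" and D :: "'i \<Rightarrow> 'b \<Rightarrow> 'a"
  assumes L: "subspace L" and A0: "linear A0"
    and ev: "eventually (\<lambda>z. linear (A z) \<and> linear (D z) \<and> (\<forall>w\<in>L. D z (A z w) = w)) F"
    and A: "\<And>u. ((\<lambda>z. A z u) \<longlongrightarrow> A0 u) F"
    and D: "\<And>v. ((\<lambda>z. D z v) \<longlongrightarrow> D0 v) F"
  shows "((\<lambda>z. closest_point (A z ` L) b) \<longlongrightarrow> closest_point (A0 ` L) b) F"
proof -
  have "subspace (A0 ` L)" using A0 L by (rule linear_subspace_image)
  then obtain w where w: "w \<in> L" "closest_point (A0 ` L) b = A0 w"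
    using closest_point_in_subspace by blast
  define \<epsilon> where "\<epsilon> z = (\<Sum>i\<in>Basis. norm (A z i - A0 i))" for z
  define \<kappa> where "\<kappa> z = (\<Sum>i\<in>Basis. norm (D z i))" for z
  define bound where "bound z = sqrt ((norm (b - A z w) + \<epsilon> z * (\<kappa> z * norm b))\<^sup>2
    - (norm (b - A0 w))\<^sup>2) + \<epsilon> z * (\<kappa> z * norm b)" for z
  have "(\<epsilon> \<longlongrightarrow> (\<Sum>i\<in>Basis. norm (A0 i - A0 i))) F"
    unfolding \<epsilon>_def by (intro tendsto_intros A)
  then have "(\<epsilon> \<longlongrightarrow> 0) F" by simp
  moreover have "(\<kappa> \<longlongrightarrow> (\<Sum>i\<in>Basis. norm (D0 i))) F"
    unfolding \<kappa>_def by (intro tendsto_intros D)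
  ultimately have "(bound \<longlongrightarrow> sqrt ((norm (b - A0 w) + 0 * ((\<Sum>i\<in>Basis. norm (D0 i)) * norm b))\<^sup>2
      - (norm (b - A0 w))\<^sup>2) + 0 * ((\<Sum>i\<in>Basis. norm (D0 i)) * norm b)) F"
    unfolding bound_def by (intro tendsto_intros A)
  then have "(bound \<longlongrightarrow> 0) F" by simp
  moreover have "eventually (\<lambda>z. norm (closest_point (A z ` L) b - closest_point (A0 ` L) b) \<le> bound z) F"
    using ev
  proof eventually_elim
    case (elim z)
    have "norm (A z u - A0 u) \<le> \<epsilon> z * norm u" for u
      unfolding \<epsilon>_def using norm_linear_le_sum_Basis[of "\<lambda>u. A z u - A0 u" u] elim A0
      by (simp add: linear_compose_sub)
    moreover have "norm (D z v) \<le> \<kappa> z * norm v" for v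
      unfolding \<kappa>_def using norm_linear_le_sum_Basis elim by blast
    ultimately show ?case unfolding bound_def using elim
      by (intro closest_point_image_estimate[OF L A0 _ _ _ _ _ _ w])
         (auto simp: \<epsilon>_def \<kappa>_def intro: sum_nonneg)
  qed
  ultimately have "((\<lambda>z. closest_point (A z ` L) b - closest_point (A0 ` L) b) \<longlongrightarrow> 0) F"
    by (rule Lim_null_comparison[rotated])
  then show ?thesis by (simp add: LIM_zero_iff)
qed

lemma norm_closest_point_le_pullback:
  fixes T :: "'a::euclidean_space set"
  assumes T: "subspace T" and J: "linear J" and JT: "\<And>v. J v \<in> T"
    and c: "onorm (\<lambda>v. closest_point T v - J v) < 1"
    and H: "\<And>v. H \<bullet> v = J v \<bullet> g"
  shows "norm (closest_point T g) \<le> 1 / (1 - onorm (\<lambda>v. closest_point T v - J v)) * norm H"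
proof -
  define c where "c = onorm (\<lambda>v. closest_point T v - J v)"
  define p where "p = closest_point T g"
  have pT: "p \<in> T" unfolding p_def by (rule closest_point_in_subspace[OF T])
  have "bounded_linear (\<lambda>v. closest_point T v - J v)"
    using J linear_conv_bounded_linear
    by (blast intro: bounded_linear_sub bounded_linear_closest_point_subspace[OF T])
  from onorm[OF this, of p] have defect: "norm (p - J p) \<le> c * norm p"
    unfolding c_def using closest_point_self[OF pT] by simp
  have "(g - p) \<bullet> p = 0" "(g - p) \<bullet> (p - J p) = 0"
    unfolding p_def using T pT JT
    by (auto intro!: closest_point_subspace_orthogonal simp: subspace_diff p_def)
  then have "p \<bullet> p = (p - J p) \<bullet> p + H \<bullet> p"
    by (simp add: H inner_diff_left inner_diff_right inner_commute)
  also have "\<dots> \<le> c * norm p * norm p + norm H * norm p"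
    using Cauchy_Schwarz_ineq2[of "p - J p" p] Cauchy_Schwarz_ineq2[of H p] defect
      mult_right_mono[OF defect norm_ge_zero[of p]]
    by (smt (verit))
  finally have "(1 - c) * norm p * norm p \<le> norm H * norm p"
    by (simp add: dot_square_norm power2_eq_square algebra_simps)
  then have "(1 - c) * norm p \<le> norm H"
    by (cases "norm p = 0") (auto simp: mult_le_cancel_right)
  then show ?thesis using c unfolding c_def p_def by (simp add: field_simps)
qed

lemma has_gderiv_egrad:
  fixes f :: "'a::euclidean_space \<Rightarrow> real"
  assumes "f differentiable (at z)"
  shows "GDERIV f z :> egrad f z"
proof -
  define D where "D = frechet_derivative f (at z)"
  have "D = (\<lambda>h. h \<bullet> adjoint D 1)"
    using adjoint_works[OF linear_frechet_derivative[OF assms]] unfolding D_def by auto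
  moreover have "(f has_derivative D) (at z)"
    using assms frechet_derivative_works unfolding D_def by blast
  ultimately have "GDERIV f z :> adjoint D 1" unfolding gderiv_def by metis
  then show ?thesis unfolding egrad_def by (rule someI)
qed

lemma inner_egrad_compose:
  fixes f :: "'b::euclidean_space \<Rightarrow> real" and F :: "'a::euclidean_space \<Rightarrow> 'b"
  assumes F: "(F has_derivative J) (at \<xi>)" and f: "f differentiable (at (F \<xi>))"
  shows "egrad (\<lambda>z. f (F z)) \<xi> \<bullet> v = J v \<bullet> egrad f (F \<xi>)"
proof -
  have "(f has_derivative (\<lambda>h. h \<bullet> egrad f (F \<xi>))) (at (F \<xi>))"
    using has_gderiv_egrad[OF f] by (simp add: gderiv_def)
  from diff_chain_at[OF F this]
  have comp: "((\<lambda>z. f (F z)) has_derivative (\<lambda>h. J h \<bullet> egrad f (F \<xi>))) (at \<xi>)"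
    by (simp add: o_def)
  then have "GDERIV (\<lambda>z. f (F z)) \<xi> :> egrad (\<lambda>z. f (F z)) \<xi>"
    by (intro has_gderiv_egrad differentiableI)
  then have "((\<lambda>z. f (F z)) has_derivative (\<lambda>h. h \<bullet> egrad (\<lambda>z. f (F z)) \<xi>)) (at \<xi>)"
    by (simp add: gderiv_def)
  from has_derivative_unique[OF this comp] show ?thesis by (metis inner_commute)
qed

lemma norm_rgrad_le_pullback:
  fixes f :: "'a::euclidean_space \<Rightarrow> real"
  assumes F: "(F has_derivative J) (at \<xi>)" and f: "f differentiable (at (F \<xi>))"
    and T: "subspace (tangent_space M (F \<xi>))" and JT: "\<And>v. J v \<in> tangent_space M (F \<xi>)"
    and c: "onorm (\<lambda>v. tproj M (F \<xi>) v - J v) < 1"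
  shows "norm (rgrad M f (F \<xi>))
           \<le> 1 / (1 - onorm (\<lambda>v. tproj M (F \<xi>) v - J v)) * norm (egrad (\<lambda>z. f (F z)) \<xi>)"
  unfolding rgrad_def tproj_def
  by (rule norm_closest_point_le_pullback[OF T has_derivative_linear[OF F] JT c[unfolded tproj_def]])
     (rule inner_egrad_compose[OF F f])

section \<open>Smooth maps and curves\<close>

lemma smooth_real_on_differentiable_on: "smooth_real_on U g \<Longrightarrow> g differentiable_on U"
  unfolding smooth_real_on_def by blast

lemma smooth_real_on_frechet_derivative:
  "smooth_real_on U g \<Longrightarrow> smooth_real_on U (\<lambda>x. frechet_derivative g (at x) v)"
  unfolding smooth_real_on_def by blast

lemma smooth_on_open: "smooth_on U F \<Longrightarrow> open U"
  unfolding smooth_on_def by blast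

lemma smooth_on_component: "smooth_on U F \<Longrightarrow> b \<in> Basis \<Longrightarrow> smooth_real_on U (\<lambda>x. F x \<bullet> b)"
  unfolding smooth_on_def by blast

lemma smooth_on_differentiable:
  assumes F: "smooth_on U F" and x: "x \<in> U"
  shows "F differentiable (at x)"
proof -
  have "(\<lambda>x. F x \<bullet> b) differentiable (at x within U)" if "b \<in> Basis" for b
    using smooth_real_on_differentiable_on[OF smooth_on_component[OF F that]] x
    unfolding differentiable_on_def by blast
  then have "(\<lambda>x. F x \<bullet> b) differentiable (at x)" if "b \<in> Basis" for b
    using that at_within_open[OF x smooth_on_open[OF F]] by simp
  then show ?thesis using differentiable_componentwise_within[of F x UNIV] by blast
qed

lemma frechet_derivative_inner_left:
  assumes "F differentiable (at x)"
  shows "frechet_derivative F (at x) v \<bullet> b = frechet_derivative (\<lambda>x. F x \<bullet> b) (at x) v"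
proof -
  have "((\<lambda>x. F x \<bullet> b) has_derivative (\<lambda>v. frechet_derivative F (at x) v \<bullet> b)) (at x)"
    using assms frechet_derivative_works by (auto intro!: derivative_eq_intros)
  from fun_cong[OF frechet_derivative_at[OF this], of v] show ?thesis by simp
qed

lemma continuous_on_smooth_on:
  assumes F: "smooth_on U F"
  shows "continuous_on U F"
proof (subst continuous_on_componentwise, intro ballI)
  fix b :: 'b assume b: "b \<in> Basis"
  show "continuous_on U (\<lambda>x. F x \<bullet> b)"
    by (intro differentiable_imp_continuous_on smooth_real_on_differentiable_on smooth_on_component F b)
qed

lemma continuous_on_frechet_derivative_smooth_on:
  assumes F: "smooth_on U F"
  shows "continuous_on U (\<lambda>p. frechet_derivative F (at p) v)"
proof (subst continuous_on_componentwise, intro ballI)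
  fix b :: 'b assume b: "b \<in> Basis"
  have "continuous_on U (\<lambda>p. frechet_derivative (\<lambda>x. F x \<bullet> b) (at p) v)"
    by (intro differentiable_imp_continuous_on smooth_real_on_differentiable_on
        smooth_real_on_frechet_derivative smooth_on_component[OF F b])
  then show "continuous_on U (\<lambda>p. frechet_derivative F (at p) v \<bullet> b)"
    by (rule continuous_on_eq) (simp add: frechet_derivative_inner_left smooth_on_differentiable[OF F])
qed

lemma has_derivative_along_line:
  assumes g: "g differentiable_on W" "open W" and I: "open I" "t \<in> I"
    and sub: "\<And>s. s \<in> I \<Longrightarrow> a + s *\<^sub>R u \<in> W" and k: "\<And>s. s \<in> I \<Longrightarrow> k s = g (a + s *\<^sub>R u)"
  shows "(k has_derivative (\<lambda>s. frechet_derivative g (at (a + t *\<^sub>R u)) (s *\<^sub>R u))) (at t)"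
proof -
  have "g differentiable (at (a + t *\<^sub>R u) within W)"
    using g sub[OF I(2)] unfolding differentiable_on_def by blast
  then have "g differentiable (at (a + t *\<^sub>R u))"
    using at_within_open[OF sub[OF I(2)] g(2)] by simp
  then have "(g has_derivative frechet_derivative g (at (a + t *\<^sub>R u))) (at (a + t *\<^sub>R u))"
    using frechet_derivative_works by blast
  moreover have "((\<lambda>s. a + s *\<^sub>R u) has_derivative (\<lambda>s. s *\<^sub>R u)) (at t)"
    by (auto intro!: derivative_eq_intros)
  ultimately have "((\<lambda>s. g (a + s *\<^sub>R u)) has_derivative (\<lambda>s. frechet_derivative g (at (a + t *\<^sub>R u)) (s *\<^sub>R u))) (at t)"
    using diff_chain_at by (simp add: o_def)
  then show ?thesis by (rule has_derivative_transform_within_open[OF _ I]) (simp add: k)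
qed

lemma smooth_real_on_line:
  assumes h: "smooth_real_on W h" "open W" and I: "open I"
    and sub: "\<And>t. t \<in> I \<Longrightarrow> a + t *\<^sub>R u \<in> W"
  shows "smooth_real_on I (\<lambda>t. h (a + t *\<^sub>R u))"
proof -
  obtain S where hS: "h \<in> S" and S: "\<And>g. g \<in> S \<Longrightarrow> g differentiable_on W"
    "\<And>g v. g \<in> S \<Longrightarrow> (\<lambda>x. frechet_derivative g (at x) v) \<in> S"
    using h(1) unfolding smooth_real_on_def by metis
  define S' where "S' = {k. \<exists>g\<in>S. \<forall>t\<in>I. k t = g (a + t *\<^sub>R u)}"
  have "k differentiable_on I \<and> (\<forall>v. (\<lambda>t. frechet_derivative k (at t) v) \<in> S')" if "k \<in> S'" for k
  proof -
    obtain g where g: "g \<in> S" and k: "\<And>t. t \<in> I \<Longrightarrow> k t = g (a + t *\<^sub>R u)"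
      using \<open>k \<in> S'\<close> unfolding S'_def by blast
    have der: "(k has_derivative (\<lambda>s. frechet_derivative g (at (a + t *\<^sub>R u)) (s *\<^sub>R u))) (at t)"
      if "t \<in> I" for t
      by (rule has_derivative_along_line[OF S(1)[OF g] h(2) I that sub k])
    have "k differentiable_on I"
      unfolding differentiable_on_def using der has_derivative_at_withinI differentiableI by blast
    moreover have "(\<lambda>t. frechet_derivative k (at t) v) \<in> S'" for v
    proof -
      have "frechet_derivative k (at t) v = frechet_derivative g (at (a + t *\<^sub>R u)) (v *\<^sub>R u)"
        if "t \<in> I" for t
        using fun_cong[OF frechet_derivative_at[OF der[OF that]], of v] by simp
      then show ?thesis unfolding S'_def
        by (intro CollectI bexI[OF _ S(2)[OF g, of "v *\<^sub>R u"]]) simp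
    qed
    ultimately show ?thesis by blast
  qed
  moreover have "(\<lambda>t. h (a + t *\<^sub>R u)) \<in> S'" using hS unfolding S'_def by blast
  ultimately show ?thesis unfolding smooth_real_on_def by blast
qed

lemma smooth_on_line:
  assumes G: "smooth_on W G" and I: "open I" and sub: "\<And>t. t \<in> I \<Longrightarrow> a + t *\<^sub>R u \<in> W"
  shows "smooth_on I (\<lambda>t. G (a + t *\<^sub>R u))"
  unfolding smooth_on_def
  using smooth_real_on_line[OF smooth_on_component[OF G] smooth_on_open[OF G] I sub] I by simp

lemma tangent_space_frechet_derivative:
  assumes G: "smooth_on W G" and p: "p \<in> W"
    and inM: "\<And>t. p + t *\<^sub>R u \<in> W \<Longrightarrow> G (p + t *\<^sub>R u) \<in> M"
  shows "frechet_derivative G (at p) u \<in> tangent_space M (G p)"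
proof -
  obtain r where r: "r > 0" "ball p r \<subseteq> W" using smooth_on_open[OF G] p openE by blast
  define e where "e = r / (norm u + 1)"
  have e: "e > 0" unfolding e_def using r by (simp add: add_nonneg_pos)
  have sub: "p + t *\<^sub>R u \<in> W" if t: "t \<in> {-e<..<e}" for t
  proof -
    have "norm (t *\<^sub>R u) \<le> e * norm u" using t by (simp, intro mult_right_mono) auto
    also have "\<dots> < r" using r unfolding e_def by (simp add: field_simps add_pos_nonneg)
    finally show ?thesis using r by (auto simp: dist_norm)
  qed
  have dG: "G differentiable (at p)" by (rule smooth_on_differentiable[OF G p])
  have "G differentiable_on W"
    using smooth_on_differentiable[OF G] by (simp add: differentiable_at_imp_differentiable_on)
  from has_derivative_along_line[OF this smooth_on_open[OF G] open_greaterThanLessThan[of "-e" e] _ sub,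
      where t=0 and k="\<lambda>t. G (p + t *\<^sub>R u)"]
  have "((\<lambda>t. G (p + t *\<^sub>R u)) has_derivative (\<lambda>s. frechet_derivative G (at p) (s *\<^sub>R u))) (at 0)"
    using e by simp
  then have "((\<lambda>t. G (p + t *\<^sub>R u)) has_vector_derivative frechet_derivative G (at p) u) (at 0)"
    unfolding has_vector_derivative_def
    using linear_scale[OF linear_frechet_derivative[OF dG]] by simp
  moreover have "smooth_on {-e<..<e} (\<lambda>t. G (p + t *\<^sub>R u))"
    by (rule smooth_on_line[OF G open_greaterThanLessThan sub])
  moreover have "G (p + t *\<^sub>R u) \<in> M" if "t \<in> {-e<..<e}" for t by (rule inM[OF sub[OF that]])
  ultimately show ?thesis
    unfolding tangent_space_def using e by (intro CollectI exI[of _ "\<lambda>t. G (p + t *\<^sub>R u)"] exI[of _ e]) simp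
qed

section \<open>Tangent spaces in slice charts\<close>

locale slice_chart =
  fixes M U V :: "'a::euclidean_space set" and \<phi> \<psi> :: "'a \<Rightarrow> 'a" and L :: "'a set"
  assumes open_U: "open U" and open_V: "open V"
    and smooth_phi: "smooth_on U \<phi>" and smooth_psi: "smooth_on V \<psi>"
    and phi_image: "\<phi> ` U = V" and psi_phi: "\<And>x. x \<in> U \<Longrightarrow> \<psi> (\<phi> x) = x"
    and phi_psi: "\<And>y. y \<in> V \<Longrightarrow> \<phi> (\<psi> y) = y"
    and subspace_L: "subspace L" and slice: "\<phi> ` (M \<inter> U) = V \<inter> L"

lemma submanifold_obtain_slice_chart:
  assumes "submanifold M" "p \<in> M"
  obtains U V \<phi> \<psi> L where "slice_chart M U V \<phi> \<psi> L" "p \<in> U"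
  using assms unfolding submanifold_def slice_chart_def by metis

context slice_chart
begin

lemma phi_in_V: "z \<in> U \<Longrightarrow> \<phi> z \<in> V"
  using phi_image by blast

lemma psi_in_M: "y \<in> V \<inter> L \<Longrightarrow> \<psi> y \<in> M \<inter> U"
  using slice psi_phi by force

lemma differentiable_phi: "z \<in> U \<Longrightarrow> \<phi> differentiable (at z)"
  by (rule smooth_on_differentiable[OF smooth_phi])

lemma differentiable_psi: "y \<in> V \<Longrightarrow> \<psi> differentiable (at y)"
  by (rule smooth_on_differentiable[OF smooth_psi])

lemma frechet_derivative_psi_phi:
  assumes z: "z \<in> U"
  shows "frechet_derivative \<psi> (at (\<phi> z)) (frechet_derivative \<phi> (at z) v) = v"
proof -
  have "frechet_derivative \<psi> (at (\<phi> z)) \<circ> frechet_derivative \<phi> (at z) = frechet_derivative (\<psi> \<circ> \<phi>) (at z)"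
    by (rule frechet_derivative_compose[symmetric, OF differentiable_phi[OF z] differentiable_psi[OF phi_in_V[OF z]]])
  also have "\<dots> = frechet_derivative id (at z)"
    by (rule frechet_derivative_transform_within_open[OF _ open_U z])
       (auto simp: psi_phi intro!: differentiable_chain_at differentiable_phi[OF z] differentiable_psi[OF phi_in_V[OF z]])
  finally show ?thesis by (metis comp_apply frechet_derivative_id id_apply)
qed

lemma frechet_derivative_phi_psi:
  assumes z: "z \<in> U"
  shows "frechet_derivative \<phi> (at z) (frechet_derivative \<psi> (at (\<phi> z)) w) = w"
proof -
  have y: "\<phi> z \<in> V" by (rule phi_in_V[OF z])
  have "\<phi> differentiable (at (\<psi> (\<phi> z)))" using differentiable_phi[OF z] psi_phi[OF z] by simp
  from frechet_derivative_compose[OF differentiable_psi[OF y] this]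
  have "frechet_derivative \<phi> (at z) \<circ> frechet_derivative \<psi> (at (\<phi> z)) = frechet_derivative (\<phi> \<circ> \<psi>) (at (\<phi> z))"
    using psi_phi[OF z] by simp
  also have "\<dots> = frechet_derivative id (at (\<phi> z))"
    by (rule frechet_derivative_transform_within_open[OF _ open_V y])
       (use differentiable_phi[OF z] differentiable_psi[OF y] psi_phi[OF z] phi_psi in \<open>auto intro!: differentiable_chain_at\<close>)
  finally show ?thesis by (metis comp_apply frechet_derivative_id id_apply)
qed

lemma image_subset_tangent_space:
  assumes z: "z \<in> M \<inter> U" and w: "w \<in> L"
  shows "frechet_derivative \<psi> (at (\<phi> z)) w \<in> tangent_space M z"
proof -
  have "\<phi> z \<in> L" using slice z by blast
  then have "\<psi> (\<phi> z + t *\<^sub>R w) \<in> M" if "\<phi> z + t *\<^sub>R w \<in> V" for t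
    using psi_in_M that subspace_L w by (simp add: subspace_add subspace_scale)
  from tangent_space_frechet_derivative[OF smooth_psi phi_in_V this] z
  show ?thesis by (simp add: psi_phi)
qed

lemma tangent_space_subset_image:
  assumes z: "z \<in> M \<inter> U" and v: "v \<in> tangent_space M z"
  shows "v \<in> frechet_derivative \<psi> (at (\<phi> z)) ` L"
proof -
  obtain c e where e: "e > 0" and c: "smooth_on {-e<..<e} c" "c 0 = z"
    and cM: "\<And>t. t \<in> {-e<..<e} \<Longrightarrow> c t \<in> M" and cv: "(c has_vector_derivative v) (at 0)"
    using v unfolding tangent_space_def by blast
  define Q where "Q = closest_point L"
  define D where "D = frechet_derivative \<phi> (at z)"
  have zU: "z \<in> U" using z by blast
  have "(\<phi> has_derivative D) (at (c 0))"
    using differentiable_phi[OF zU] frechet_derivative_works c(2) unfolding D_def by blast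
  from diff_chain_at[OF cv[unfolded has_vector_derivative_def] this]
  have "((\<lambda>t. \<phi> (c t)) has_derivative (\<lambda>s. D (s *\<^sub>R v))) (at 0)" by (simp add: o_def)
  then have "((\<lambda>t. \<phi> (c t) - Q (\<phi> (c t))) has_derivative (\<lambda>s. D (s *\<^sub>R v) - Q (D (s *\<^sub>R v)))) (at 0)"
    unfolding Q_def
    by (intro has_derivative_diff bounded_linear.has_derivative[OF bounded_linear_closest_point_subspace[OF subspace_L]])
  \<comment> \<open>near \<open>0\<close> the curve \<open>\<phi> \<circ> c\<close> stays in the slice \<open>L\<close>, where \<open>id - Q\<close> vanishes\<close>
  moreover define X where "X = {-e<..<e} \<inter> c -` U"
  have "open X" unfolding X_def
    by (rule continuous_open_preimage[OF continuous_on_smooth_on[OF c(1)] open_greaterThanLessThan open_U])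
  moreover have "0 \<in> X" unfolding X_def using e c(2) zU by auto
  moreover have "\<phi> (c t) - Q (\<phi> (c t)) = 0" if "t \<in> X" for t
  proof -
    have "\<phi> (c t) \<in> L" using that cM slice unfolding X_def by blast
    then show ?thesis unfolding Q_def by (simp add: closest_point_self)
  qed
  ultimately have "((\<lambda>t. 0) has_derivative (\<lambda>s. D (s *\<^sub>R v) - Q (D (s *\<^sub>R v)))) (at 0)"
    by (rule has_derivative_transform_within_open) simp
  from has_derivative_unique[OF this has_derivative_const]
  have "D v = Q (D v)" by (metis (mono_tags) diff_eq_eq add_0 scale_one)
  then have "D v \<in> L" unfolding Q_def by (metis closest_point_in_subspace[OF subspace_L])
  moreover have "v = frechet_derivative \<psi> (at (\<phi> z)) (D v)"
    unfolding D_def by (simp add: frechet_derivative_psi_phi[OF zU])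
  ultimately show ?thesis by blast
qed

lemma tangent_space_eq_image:
  "z \<in> M \<inter> U \<Longrightarrow> tangent_space M z = frechet_derivative \<psi> (at (\<phi> z)) ` L"
  using tangent_space_subset_image image_subset_tangent_space by blast

lemma subspace_tangent_space_chart:
  assumes z: "z \<in> M \<inter> U"
  shows "subspace (tangent_space M z)"
  unfolding tangent_space_eq_image[OF z]
  using z by (intro linear_subspace_image linear_frechet_derivative differentiable_psi phi_in_V subspace_L) auto

lemma tendsto_tproj_chart:
  assumes x: "x \<in> M \<inter> U"
  shows "((\<lambda>z. tproj M z b) \<longlongrightarrow> tproj M x b) (at x within M)"
proof -
  define A where "A z = frechet_derivative \<psi> (at (\<phi> z))" for z
  define D where "D z = frechet_derivative \<phi> (at z)" for z
  have near: "eventually (\<lambda>z. z \<in> M \<inter> U) (at x within M)"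
    using x open_U unfolding eventually_at_topological by blast
  have "continuous_on U (\<lambda>z. A z u)" for u
    unfolding A_def using phi_image
    by (intro continuous_on_compose2[OF continuous_on_frechet_derivative_smooth_on[OF smooth_psi]
          continuous_on_smooth_on[OF smooth_phi]]) auto
  moreover have "continuous_on U (\<lambda>z. D z v)" for v
    unfolding D_def by (rule continuous_on_frechet_derivative_smooth_on[OF smooth_phi])
  moreover have "((\<lambda>z. h z) \<longlongrightarrow> h x) (at x within M)" if "continuous_on U h" for h :: "'a \<Rightarrow> 'a"
    using that x open_U
    by (simp add: continuous_on_eq_continuous_at continuous_at_imp_continuous_at_within flip: continuous_within)
  ultimately have A: "((\<lambda>z. A z u) \<longlongrightarrow> A x u) (at x within M)"
    and D: "((\<lambda>z. D z v) \<longlongrightarrow> D x v) (at x within M)" for u v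
    by blast+
  have "eventually (\<lambda>z. linear (A z) \<and> linear (D z) \<and> (\<forall>w\<in>L. D z (A z w) = w)) (at x within M)"
    using near
    by eventually_elim
       (auto simp: A_def D_def frechet_derivative_phi_psi intro!: linear_frechet_derivative
          differentiable_phi differentiable_psi phi_in_V)
  from tendsto_closest_point_image[OF subspace_L _ this A D]
  have "((\<lambda>z. closest_point (A z ` L) b) \<longlongrightarrow> closest_point (A x ` L) b) (at x within M)"
    using x unfolding A_def by (auto intro!: linear_frechet_derivative differentiable_psi phi_in_V)
  moreover have "eventually (\<lambda>z. closest_point (A z ` L) b = tproj M z b) (at x within M)"
    using near by eventually_elim (simp add: A_def tproj_def tangent_space_eq_image)
  ultimately show ?thesis
    using x by (simp add: tendsto_cong tproj_def A_def tangent_space_eq_image)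
qed

end

lemma subspace_tangent_space:
  assumes "submanifold M" "z \<in> M"
  shows "subspace (tangent_space M z)"
  using assms by (metis IntI submanifold_obtain_slice_chart slice_chart.subspace_tangent_space_chart)

lemma tendsto_tproj:
  assumes "submanifold M" "x \<in> M"
  shows "((\<lambda>z. tproj M z b) \<longlongrightarrow> tproj M x b) (at x within M)"
  using assms by (metis IntI submanifold_obtain_slice_chart slice_chart.tendsto_tproj_chart)

section \<open>Local form of the extended retraction\<close>

lemma isCont_imp_tendsto_inf_principal:
  fixes f :: "'a::t2_space \<Rightarrow> 'b::topological_space"
  shows "isCont f a \<Longrightarrow> (f \<longlongrightarrow> f a) (inf (nhds a) (principal S))"
  by (metis inf_le1 isCont_def tendsto_at_iff_tendsto_nhds tendsto_mono)

locale local_retraction =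
  fixes M :: "'a::euclidean_space set" and Retr :: "'a \<Rightarrow> 'a \<Rightarrow> 'a" and x :: 'a
    and W :: "('a \<times> 'a) set" and G :: "'a \<times> 'a \<Rightarrow> 'a"
  assumes submanifold_M: "submanifold M" and retraction_Retr: "retraction M Retr" and x_in_M: "x \<in> M"
    and open_W: "open W" and origin_in_W: "(x, 0) \<in> W" and smooth_G: "smooth_on W G"
    and G_eq_Retr: "\<And>v. v \<in> tangent_space M x \<Longrightarrow> (x, v) \<in> W \<Longrightarrow> G (x, v) = Retr x v"

lemma local_retraction_exists:
  assumes M: "submanifold M" and R: "retraction M Retr" and x: "x \<in> M"
  obtains W G where "local_retraction M Retr x W G"
proof -
  have "(x, 0) \<in> tangent_bundle M"
    using subspace_0[OF subspace_tangent_space[OF M x]] x by (simp add: tangent_bundle_def)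
  then obtain W G where "open W" "(x, 0) \<in> W" "smooth_on W G"
    "\<forall>q\<in>W \<inter> tangent_bundle M. G q = (\<lambda>(x, v). Retr x v) q"
    using R unfolding retraction_def smooth_map_on_def by blast
  then show thesis
    by (intro that) (auto simp: local_retraction_def tangent_bundle_def M R x)
qed

context local_retraction
begin

definition N :: "'a set" where "N = (\<lambda>z. (x, tproj M x z)) -` W"

definition J :: "'a \<Rightarrow> 'a \<Rightarrow> 'a" where
  "J z v = frechet_derivative G (at (x, tproj M x z)) (0, tproj M x v)"

lemma subspace_tangent_space_base: "subspace (tangent_space M x)"
  by (rule subspace_tangent_space[OF submanifold_M x_in_M])

lemma bounded_linear_tproj: "bounded_linear (tproj M x)"
  unfolding tproj_def[abs_def] by (rule bounded_linear_closest_point_subspace[OF subspace_tangent_space_base])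

lemma tproj_in_tangent_space: "tproj M x v \<in> tangent_space M x"
  unfolding tproj_def by (rule closest_point_in_subspace[OF subspace_tangent_space_base])

lemma tproj_tangent: "v \<in> tangent_space M x \<Longrightarrow> tproj M x v = v"
  unfolding tproj_def by (rule closest_point_self)

lemma Retr_in_M: "v \<in> tangent_space M x \<Longrightarrow> Retr x v \<in> M"
  using retraction_Retr x_in_M unfolding retraction_def by blast

lemma open_N: "open N"
  unfolding N_def
  by (intro continuous_open_vimage open_W
      continuous_Pair[OF continuous_const linear_continuous_at[OF bounded_linear_tproj]])

lemma zero_in_N: "0 \<in> N"
  unfolding N_def using origin_in_W tproj_tangent[OF subspace_0[OF subspace_tangent_space_base]] by simp

lemma retr_ext_eq_G: "z \<in> N \<Longrightarrow> retr_ext M Retr x z = G (x, tproj M x z)"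
  unfolding N_def retr_ext_def by (simp add: G_eq_Retr tproj_in_tangent_space)

lemma has_derivative_retr_ext:
  assumes z: "z \<in> N"
  shows "(retr_ext M Retr x has_derivative J z) (at z)"
proof -
  have "(x, tproj M x z) \<in> W" using z unfolding N_def by simp
  then have "(G has_derivative frechet_derivative G (at (x, tproj M x z))) (at (x, tproj M x z))"
    using smooth_on_differentiable[OF smooth_G] frechet_derivative_works by blast
  moreover have "((\<lambda>z. (x, tproj M x z)) has_derivative (\<lambda>v. (0, tproj M x v))) (at z)"
    by (intro has_derivative_Pair has_derivative_const bounded_linear.has_derivative[OF bounded_linear_tproj]
        has_derivative_ident)
  ultimately have "((\<lambda>z. G (x, tproj M x z)) has_derivative J z) (at z)"
    unfolding J_def using diff_chain_at by (simp add: o_def)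
  then show ?thesis
    by (rule has_derivative_transform_within_open[OF _ open_N z]) (simp add: retr_ext_eq_G)
qed

lemma continuous_on_J: "continuous_on N (\<lambda>z. J z v)"
  unfolding J_def N_def
  by (rule continuous_on_compose2[OF continuous_on_frechet_derivative_smooth_on[OF smooth_G]])
     (auto intro: continuous_on_Pair[OF continuous_on_const linear_continuous_on[OF bounded_linear_tproj]])

lemma frechet_derivative_G_origin:
  assumes u: "u \<in> tangent_space M x"
  shows "frechet_derivative G (at (x, 0)) (0, u) = u"
proof -
  have "((\<lambda>t. Retr x (t *\<^sub>R u)) has_derivative (\<lambda>s. s *\<^sub>R u)) (at 0)"
    using retraction_Retr x_in_M u unfolding retraction_def has_vector_derivative_def by blast
  moreover have "open ((\<lambda>t::real. (x, t *\<^sub>R u)) -` W)"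
    by (intro continuous_open_vimage open_W continuous_intros)
  moreover have "G (x, t *\<^sub>R u) = Retr x (t *\<^sub>R u)" if "(x, t *\<^sub>R u) \<in> W" for t
    using G_eq_Retr subspace_scale[OF subspace_tangent_space_base u] that by blast
  ultimately have along_Retr: "((\<lambda>t. G (x, t *\<^sub>R u)) has_derivative (\<lambda>s. s *\<^sub>R u)) (at 0)"
    by (elim has_derivative_transform_within_open) (auto simp: origin_in_W)
  have "(G has_derivative frechet_derivative G (at (x, 0))) (at (x, 0))"
    using smooth_on_differentiable[OF smooth_G origin_in_W] frechet_derivative_works by blast
  then have G': "(G has_derivative frechet_derivative G (at (x, 0))) (at (x, 0 *\<^sub>R u))" by simp
  have "((\<lambda>t. (x, t *\<^sub>R u)) has_derivative (\<lambda>s. (0, s *\<^sub>R u))) (at 0)"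
    by (auto intro!: derivative_eq_intros)
  from diff_chain_at[OF this G']
  have "((\<lambda>t. G (x, t *\<^sub>R u)) has_derivative (\<lambda>s. frechet_derivative G (at (x, 0)) (0, s *\<^sub>R u))) (at 0)"
    by (simp add: o_def)
  from has_derivative_unique[OF this along_Retr] show ?thesis by (metis scale_one)
qed

lemma J_origin: "J 0 v = tproj M x v"
  unfolding J_def using tproj_tangent[OF subspace_0[OF subspace_tangent_space_base]]
  by (simp add: frechet_derivative_G_origin tproj_in_tangent_space)

lemma J_in_tangent_space:
  assumes \<xi>: "\<xi> \<in> N" "\<xi> \<in> tangent_space M x"
  shows "J \<xi> v \<in> tangent_space M (Retr x \<xi>)"
proof -
  have p: "(x, \<xi>) \<in> W" using \<xi> unfolding N_def by (simp add: tproj_tangent)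
  have "G ((x, \<xi>) + t *\<^sub>R (0, tproj M x v)) \<in> M" if "(x, \<xi>) + t *\<^sub>R (0, tproj M x v) \<in> W" for t
  proof -
    have "\<xi> + t *\<^sub>R tproj M x v \<in> tangent_space M x"
      using \<xi>(2) subspace_tangent_space_base
      by (intro subspace_add subspace_scale tproj_in_tangent_space)
    then show ?thesis using that by (simp add: G_eq_Retr Retr_in_M)
  qed
  from tangent_space_frechet_derivative[OF smooth_G p this]
  show ?thesis unfolding J_def using p \<xi>(2) by (simp add: tproj_tangent G_eq_Retr)
qed

lemma tendsto_Retr: "(Retr x \<longlongrightarrow> x) (inf (nhds 0) (principal (tangent_space M x)))"
proof -
  have "isCont (retr_ext M Retr x) 0"
    by (rule has_derivative_continuous[OF has_derivative_retr_ext[OF zero_in_N]])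
  moreover have "retr_ext M Retr x 0 = x"
    using retraction_Retr x_in_M tproj_tangent[OF subspace_0[OF subspace_tangent_space_base]]
    unfolding retr_ext_def retraction_def by simp
  ultimately have "(retr_ext M Retr x \<longlongrightarrow> x) (inf (nhds 0) (principal (tangent_space M x)))"
    using isCont_imp_tendsto_inf_principal by metis
  moreover have "eventually (\<lambda>\<xi>. retr_ext M Retr x \<xi> = Retr x \<xi>) (inf (nhds 0) (principal (tangent_space M x)))"
    by (simp add: eventually_inf_principal retr_ext_def tproj_tangent)
  ultimately show ?thesis by (simp add: tendsto_cong)
qed

lemma eventually_onorm_defect_less_one:
  "eventually (\<lambda>\<xi>. \<xi> \<in> N \<and> onorm (\<lambda>v. tproj M (Retr x \<xi>) v - J \<xi> v) < 1)
     (inf (nhds 0) (principal (tangent_space M x)))"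
  (is "eventually _ ?F")
proof -
  have in_N: "eventually (\<lambda>\<xi>. \<xi> \<in> N) ?F"
    unfolding eventually_inf_principal
    using eventually_nhds_in_open[OF open_N zero_in_N] by (rule eventually_mono) simp
  have in_T: "eventually (\<lambda>\<xi>. \<xi> \<in> tangent_space M x) ?F"
    by (simp add: eventually_inf_principal)
  have "eventually (\<lambda>\<xi>. Retr x \<xi> \<in> M) ?F"
    using in_T by eventually_elim (rule Retr_in_M)
  moreover have "continuous (at x within M) (\<lambda>z. tproj M z i)" for i
    using tendsto_tproj[OF submanifold_M x_in_M] by (simp add: continuous_within)
  ultimately have "((\<lambda>\<xi>. tproj M (Retr x \<xi>) i) \<longlongrightarrow> tproj M x i) ?F" for i
    using continuous_within_tendsto_compose[OF _ _ tendsto_Retr] by blast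
  moreover have "((\<lambda>\<xi>. J \<xi> i) \<longlongrightarrow> tproj M x i) ?F" for i
  proof -
    have "isCont (\<lambda>\<xi>. J \<xi> i) 0"
      using continuous_on_J open_N zero_in_N by (simp add: continuous_on_eq_continuous_at)
    from isCont_imp_tendsto_inf_principal[OF this] show ?thesis by (simp add: J_origin)
  qed
  ultimately have "((\<lambda>\<xi>. \<Sum>i\<in>Basis. norm (tproj M (Retr x \<xi>) i - J \<xi> i)) \<longlongrightarrow>
      (\<Sum>i\<in>Basis. norm (tproj M x i - tproj M x i))) ?F"
    by (intro tendsto_intros)
  then have "((\<lambda>\<xi>. \<Sum>i\<in>Basis. norm (tproj M (Retr x \<xi>) i - J \<xi> i)) \<longlongrightarrow> 0) ?F"
    by simp
  from order_tendstoD(2)[OF this zero_less_one]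
  have "eventually (\<lambda>\<xi>. (\<Sum>i\<in>Basis. norm (tproj M (Retr x \<xi>) i - J \<xi> i)) < 1) ?F" .
  with in_N in_T show ?thesis
  proof eventually_elim
    case (elim \<xi>)
    have "subspace (tangent_space M (Retr x \<xi>))"
      by (rule subspace_tangent_space[OF submanifold_M Retr_in_M[OF elim(2)]])
    then have "bounded_linear (\<lambda>v. tproj M (Retr x \<xi>) v - J \<xi> v)"
      unfolding tproj_def
      using has_derivative_bounded_linear[OF has_derivative_retr_ext[OF elim(1)]]
      by (intro bounded_linear_sub bounded_linear_closest_point_subspace)
    from onorm_componentwise[OF this] show ?case using elim by simp
  qed
qed

lemma frechet_derivative_retr_ext: "z \<in> N \<Longrightarrow> frechet_derivative (retr_ext M Retr x) (at z) = J z"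
  using frechet_derivative_at[OF has_derivative_retr_ext] by simp

lemma norm_rgrad_le_retr_ext:
  assumes f: "f differentiable (at (Retr x \<xi>))" and \<xi>: "\<xi> \<in> N" "\<xi> \<in> tangent_space M x"
    and c: "onorm (\<lambda>v. tproj M (Retr x \<xi>) v - J \<xi> v) < 1"
  shows "norm (rgrad M f (Retr x \<xi>))
           \<le> 1 / (1 - onorm (\<lambda>v. tproj M (Retr x \<xi>) v - J \<xi> v)) * norm (egrad (\<lambda>z. f (retr_ext M Retr x z)) \<xi>)"
proof -
  have y: "retr_ext M Retr x \<xi> = Retr x \<xi>"
    using \<xi>(2) by (simp add: retr_ext_def tproj_tangent)
  show ?thesis
    using norm_rgrad_le_pullback[OF has_derivative_retr_ext[OF \<xi>(1)], of f M] f c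
      subspace_tangent_space[OF submanifold_M Retr_in_M[OF \<xi>(2)]] J_in_tangent_space[OF \<xi>]
    unfolding y by blast
qed

end

theorem proposition2p7:
  fixes f :: "'a::euclidean_space \<Rightarrow> real" and M :: "'a set" and Retr :: "'a \<Rightarrow> 'a \<Rightarrow> 'a"
  assumes "smooth_on UNIV f" and "submanifold M" and "retraction M Retr"
  shows "\<forall>x\<in>M. \<exists>\<delta>>0. \<forall>\<xi>\<in>tangent_space M x. norm \<xi> < \<delta> \<longrightarrow>
           (let y = Retr x \<xi>;
                J = frechet_derivative (retr_ext M Retr x) (at \<xi>);
                c = onorm (\<lambda>v. tproj M y v - J v)
            in c < 1 \<and>
               norm (rgrad M f y) \<le> (1 / (1 - c)) * norm (egrad (\<lambda>z. f (retr_ext M Retr x z)) \<xi>))"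
proof
  fix x assume x: "x \<in> M"
  obtain W G where "local_retraction M Retr x W G"
    using local_retraction_exists[OF assms(2,3) x] .
  then interpret local_retraction M Retr x W G .
  obtain \<delta> where "\<delta> > 0" and small: "\<And>\<xi>. \<xi> \<in> tangent_space M x \<Longrightarrow> norm \<xi> < \<delta> \<Longrightarrow>
      \<xi> \<in> N \<and> onorm (\<lambda>v. tproj M (Retr x \<xi>) v - J \<xi> v) < 1"
    using eventually_onorm_defect_less_one
    unfolding eventually_inf_principal eventually_nhds_metric dist_norm by auto
  then show "\<exists>\<delta>>0. \<forall>\<xi>\<in>tangent_space M x. norm \<xi> < \<delta> \<longrightarrow>
           (let y = Retr x \<xi>;
                J = frechet_derivative (retr_ext M Retr x) (at \<xi>);
                c = onorm (\<lambda>v. tproj M y v - J v)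
            in c < 1 \<and>
               norm (rgrad M f y) \<le> (1 / (1 - c)) * norm (egrad (\<lambda>z. f (retr_ext M Retr x z)) \<xi>))"
    using frechet_derivative_retr_ext norm_rgrad_le_retr_ext smooth_on_differentiable[OF assms(1)]
    by (auto simp: Let_def)
qed

end
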